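(* Let $1\le s\le n$, let $\mathbf{D}=[\mathbf{d}_1,\dots,\mathbf{d}_n]\in\mathbb{R}^{d\times n}$ be any matrix with $\max\{\|\mathbf{d}_i\|_2^2: i\in[n]\}\le\rho$, and let $\mathbf{g}\sim N(\mathbf{0},\mathbf{I}_d)$. Then \[ \mathbb{E}\sqrt{\frac1s\sum_{\ell=1}^s\big((\mathbf{D}^\top\mathbf{g})^*_\ell\big)^2}\ \le\ \sqrt{4\rho\log(\sqrt2\,n/s)}. \]
   Context: For $\mathbf{x}\in\mathbb{R}^n$, the nonincreasing rearrangement $\mathbf{x}^*$ satisfies $x_1^*\ge\dots\ge x_n^*\ge0$ with $x_i^*=|x_{\pi(i)}|$ for some permutation $\pi$. *)

theory Defs
  imports "HOL-Probability.Probability"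
begin

text \<open>Nonincreasing rearrangement of the absolute values of the first n entries
  of x (0-based list indexing: entry l corresponds to x^*_{l+1}).\<close>
definition rearr :: "(nat \<Rightarrow> real) \<Rightarrow> nat \<Rightarrow> real list" where
  "rearr x n = rev (sort (map (\<lambda>i. \<bar>x i\<bar>) [0..<n]))"

definition gauss_vec :: "nat \<Rightarrow> (nat \<Rightarrow> real) measure" where
  "gauss_vec d = PiM {..<d} (\<lambda>_. std_normal_distribution)"

definition DTg :: "nat \<Rightarrow> (nat \<Rightarrow> nat \<Rightarrow> real) \<Rightarrow> (nat \<Rightarrow> real) \<Rightarrow> nat \<Rightarrow> real" where
  "DTg d D g j = (\<Sum>i<d. D i j * g i)"

end

theory Submission
  imports Defs
begin

text \<open>Put t = 1 / (4 \<rho>) and let Y be the mean of the s largest squared entries of D^T g.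
  Jensen's inequality for exp bounds exp (t Y) by 1/s times the sum of exp (t (d_j . g)^2) over
  all n columns. Each d_j . g is a centred normal variable of variance at most \<rho>, so
  E exp (t (d_j . g)^2) = (1 - 2 t Var)^(-1/2) \<le> sqrt 2, whence E exp (t Y) \<le> sqrt 2 n / s.
  Concavity of ln and sqrt turns this into E sqrt Y \<le> sqrt (ln (sqrt 2 n / s) / t); both
  concavity steps are taken along tangent lines, so only exp (t Y) needs to be integrable.\<close>

lemma sum_rearr: "(\<Sum>l<n. f (rearr x n ! l)) = (\<Sum>j<n. f \<bar>x j\<bar>)"
proof -
  have "(\<Sum>l<n. f (rearr x n ! l)) = sum_list (map f (rearr x n))"
    by (simp add: rearr_def sum_list_sum_nth atLeast0LessThan)
  also have "\<dots> = sum_list (map f (map (\<lambda>j. \<bar>x j\<bar>) [0..<n]))"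
    by (simp add: rearr_def multiset.map_comp flip: sum_mset_sum_list)
  also have "\<dots> = (\<Sum>j<n. f \<bar>x j\<bar>)"
    by (simp add: sum_list_sum_nth atLeast0LessThan)
  finally show ?thesis .
qed

lemma exp_average_le_average_exp:
  fixes a :: "nat \<Rightarrow> real"
  assumes "0 < s" "s \<le> n"
  shows "exp ((\<Sum>l<s. a l) / s) \<le> (\<Sum>l<n. exp (a l)) / s"
proof -
  have "exp ((\<Sum>l<s. a l) / s) = exp (\<Sum>l<s. (1 / real s) * a l)"
    by (simp add: sum_divide_distrib)
  also have "\<dots> \<le> (\<Sum>l<s. (1 / real s) * exp (a l))"
    using convex_on_sum[OF _ _ exp_convex, of "{..<s}" "\<lambda>_. 1 / real s" a] assms(1)
    by (simp add: lessThan_empty_iff)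
  also have "\<dots> \<le> (\<Sum>l<n. (1 / real s) * exp (a l))"
    using assms(2) by (intro sum_mono2) auto
  finally show ?thesis by (simp add: sum_divide_distrib)
qed

lemma exp_mean_square_rearr_le:
  assumes "0 < s" "s \<le> n"
  shows "exp (t * ((1 / real s) * (\<Sum>l<s. (rearr x n ! l)\<^sup>2))) \<le> (\<Sum>j<n. exp (t * (x j)\<^sup>2)) / s"
proof -
  have "exp (t * ((1 / real s) * (\<Sum>l<s. (rearr x n ! l)\<^sup>2)))
      = exp ((\<Sum>l<s. t * (rearr x n ! l)\<^sup>2) / s)"
    by (simp add: sum_distrib_left sum_divide_distrib)
  also have "\<dots> \<le> (\<Sum>l<n. exp (t * (rearr x n ! l)\<^sup>2)) / s"
    using assms by (rule exp_average_le_average_exp)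
  also have "\<dots> = (\<Sum>j<n. exp (t * (x j)\<^sup>2)) / s"
    using sum_rearr[of "\<lambda>z. exp (t * z\<^sup>2)"] by simp
  finally show ?thesis .
qed

lemma rearr_eq_replicate_0:
  assumes "\<And>j. j < n \<Longrightarrow> x j = 0"
  shows "rearr x n = replicate n 0"
proof -
  have "map (\<lambda>j. \<bar>x j\<bar>) [0..<n] = replicate n 0"
    using assms by (intro nth_equalityI) auto
  then show ?thesis by (simp add: rearr_def)
qed

lemma rearr_DTg_zero_columns:
  assumes "\<forall>j<n. (\<Sum>i<d. (D i j)\<^sup>2) \<le> 0"
  shows "rearr (DTg d D g) n = replicate n 0"
proof -
  have "(\<Sum>i<d. (D i j)\<^sup>2) = 0" if "j < n" for j
    using assms that by (intro antisym) (auto intro: sum_nonneg)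
  then show ?thesis
    by (intro rearr_eq_replicate_0) (simp add: DTg_def sum_nonneg_eq_0_iff)
qed

lemma (in prob_space) nn_integral_sqrt_le_ln_exp_moment:
  fixes Y Z :: "'a \<Rightarrow> real"
  assumes "0 < t" "1 < K"
    and Y: "\<And>x. x \<in> space M \<Longrightarrow> 0 \<le> Y x"
    and YZ: "\<And>x. x \<in> space M \<Longrightarrow> exp (t * Y x) \<le> Z x"
    and Z: "integrable M Z" "expectation Z \<le> K"
  shows "(\<integral>\<^sup>+x. sqrt (Y x) \<partial>M) \<le> sqrt (ln K / t)"
proof -
  define L where "L = ln K"
  define c where "c = sqrt (L / t)"
  have "0 < L" using assms(2) by (simp add: L_def)
  then have c: "0 < c" "c\<^sup>2 = L / t"
    using assms(1) by (simp_all add: c_def)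
  define h where "h x = ((L - 1 + Z x / K) / (t * c) + c) / 2" for x
  have sqrt_le_h: "sqrt (Y x) \<le> h x" if x: "x \<in> space M" for x
  proof -
    \<comment> \<open>tangent line of exp at L, then of sqrt at c\<close>
    have "t * Y x \<le> L - 1 + exp (t * Y x - L)"
      using exp_ge_add_one_self[of "t * Y x - L"] by linarith
    also have "exp (t * Y x - L) \<le> Z x / K"
      using YZ[OF x] assms(2) by (simp add: exp_diff L_def divide_right_mono)
    finally have "Y x / c \<le> (L - 1 + Z x / K) / (t * c)"
      using assms(1) c by (simp add: field_simps)
    moreover have "sqrt (Y x) \<le> (Y x / c + c) / 2"
      using arith_geo_mean_sqrt[of "Y x / c" c] Y[OF x] c by simp
    ultimately show ?thesis by (simp add: h_def)
  qed
  have "integrable M h"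
    unfolding h_def using Z(1) by simp
  moreover have "expectation h \<le> c"
  proof -
    have "expectation h = ((L - 1 + expectation Z / K) / (t * c) + c) / 2"
      unfolding h_def using Z(1) prob_space
      by (simp add: Bochner_Integration.integral_add Bochner_Integration.integral_diff)
    also have "\<dots> \<le> (L / (t * c) + c) / 2"
      using Z(2) assms(1,2) c(1) by (simp add: divide_right_mono field_simps)
    also have "\<dots> = c"
      using assms(1) c by (simp add: field_simps power2_eq_square)
    finally show ?thesis .
  qed
  moreover have "0 \<le> h x" if "x \<in> space M" for x
    using sqrt_le_h[OF that] Y[OF that] by (meson order_trans real_sqrt_ge_zero)
  ultimately have "(\<integral>\<^sup>+x. h x \<partial>M) \<le> c"
    by (simp add: nn_integral_eq_integral ennreal_leI)
  moreover have "(\<integral>\<^sup>+x. sqrt (Y x) \<partial>M) \<le> (\<integral>\<^sup>+x. h x \<partial>M)"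
    using sqrt_le_h by (intro nn_integral_mono ennreal_leI) simp
  ultimately show ?thesis
    by (simp add: c_def L_def)
qed

lemma indep_vars_PiM_coordinates:
  assumes "\<And>i. i \<in> I \<Longrightarrow> prob_space (M i)"
  shows "prob_space.indep_vars (PiM I M) M (\<lambda>i x. x i) I"
proof -
  interpret prob_space "PiM I M" by (rule prob_space_PiM[OF assms])
  show ?thesis
  proof (cases "I = {}")
    case True
    have "indep_vars M (\<lambda>i x. x i) {}"
      by (simp add: indep_vars_def indep_sets_def)
    then show ?thesis using True by simp
  next
    case False
    have "distr (PiM I M) (PiM I M) (\<lambda>x. \<lambda>i\<in>I. x i) = distr (PiM I M) (PiM I M) (\<lambda>x. x)"
      by (intro distr_cong) (auto simp: space_PiM PiE_restrict)
    also have "\<dots> = (\<Pi>\<^sub>M i\<in>I. distr (PiM I M) (M i) (\<lambda>x. x i))"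
      by (auto simp: distr_id intro!: PiM_cong distr_PiM_component[symmetric] assms)
    finally show ?thesis
      by (subst indep_vars_iff_distr_eq_PiM'[OF False]) auto
  qed
qed

lemma prob_space_gauss_vec: "prob_space (gauss_vec d)"
  unfolding gauss_vec_def by (intro prob_space_PiM) (simp add: prob_space_normal_density)

lemma gauss_vec_coordinate_distributed:
  assumes "i < d"
  shows "distributed (gauss_vec d) lborel (\<lambda>g. g i) std_normal_density"
proof -
  have "distr (gauss_vec d) std_normal_distribution (\<lambda>g. g i) = std_normal_distribution"
    unfolding gauss_vec_def using assms
    by (intro distr_PiM_component) (simp_all add: prob_space_normal_density)
  then show ?thesis
    unfolding distributed_def gauss_vec_def using assms
    by (auto cong: distr_cong measurable_cong_sets)
qed

lemma gauss_vec_linear_distributed: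
  assumes "\<exists>i<d. c i \<noteq> 0"
  shows "distributed (gauss_vec d) lborel (\<lambda>g. \<Sum>i<d. c i * g i)
           (normal_density 0 (sqrt (\<Sum>i<d. (c i)\<^sup>2)))"
proof -
  interpret prob_space "gauss_vec d" by (rule prob_space_gauss_vec)
  define J where "J = {i. i < d \<and> c i \<noteq> 0}"
  have J: "finite J" "J \<noteq> {}" "J \<subseteq> {..<d}"
    using assms by (auto simp: J_def)
  have "indep_vars (\<lambda>_. std_normal_distribution) (\<lambda>i g. g i) {..<d}"
    using indep_vars_PiM_coordinates[of "{..<d}" "\<lambda>_. std_normal_distribution"]
    by (simp add: gauss_vec_def prob_space_normal_density)
  then have "indep_vars (\<lambda>_. std_normal_distribution) (\<lambda>i g. g i) J"
    using J(3) by (rule indep_vars_subset)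
  then have "indep_vars (\<lambda>_. borel) (\<lambda>i g. c i * g i) J"
    by (rule indep_vars_compose2[where Y = "\<lambda>i x. c i * x"]) (auto cong: measurable_cong_sets)
  moreover have "distributed (gauss_vec d) lborel (\<lambda>g. c i * g i) (normal_density 0 \<bar>c i\<bar>)"
    if "i \<in> J" for i
    using normal_density_affine[OF gauss_vec_coordinate_distributed, of i "c i" 0] that
    by (auto simp: J_def)
  ultimately have "distributed (gauss_vec d) lborel (\<lambda>g. \<Sum>i\<in>J. c i * g i)
      (normal_density 0 (sqrt (\<Sum>i\<in>J. \<bar>c i\<bar>\<^sup>2)))"
    using sum_indep_normal[OF J(1,2), of _ "\<lambda>i. \<bar>c i\<bar>" "\<lambda>_. 0"] by (simp add: J_def)
  moreover have "(\<Sum>i\<in>J. f i) = (\<Sum>i<d. f i)" if "\<And>i. c i = 0 \<Longrightarrow> f i = 0" for f :: "nat \<Rightarrow> real"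
    using that by (intro sum.mono_neutral_left) (auto simp: J_def)
  ultimately show ?thesis by simp
qed

lemma normal_density_mult_exp_square:
  assumes "0 < \<sigma>" "0 < a" "a = 1 - 2 * t * \<sigma>\<^sup>2"
  shows "normal_density 0 \<sigma> x * exp (t * x\<^sup>2) = normal_density 0 (\<sigma> / sqrt a) x / sqrt a"
proof -
  have "- x\<^sup>2 / (2 * \<sigma>\<^sup>2) + t * x\<^sup>2 = - x\<^sup>2 / (2 * (\<sigma> / sqrt a)\<^sup>2)"
    using assms(1,2) unfolding assms(3)
    by (simp add: power_divide field_simps)
  moreover have "sqrt (2 * pi * \<sigma>\<^sup>2) = sqrt a * sqrt (2 * pi * (\<sigma> / sqrt a)\<^sup>2)"
    using assms by (simp add: power_divide real_sqrt_divide real_sqrt_mult)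
  ultimately show ?thesis
    by (simp add: normal_density_def mult_exp_exp)
qed

lemma nn_integral_normal_exp_square:
  assumes "0 < \<sigma>" "2 * t * \<sigma>\<^sup>2 < 1"
  shows "(\<integral>\<^sup>+x. normal_density 0 \<sigma> x * exp (t * x\<^sup>2) \<partial>lborel) = 1 / sqrt (1 - 2 * t * \<sigma>\<^sup>2)"
proof -
  define a where "a = 1 - 2 * t * \<sigma>\<^sup>2"
  have a: "0 < a" using assms(2) by (simp add: a_def)
  have "(\<integral>\<^sup>+x. normal_density 0 \<sigma> x * exp (t * x\<^sup>2) \<partial>lborel)
      = (\<integral>\<^sup>+x. ennreal (1 / sqrt a) * normal_density 0 (\<sigma> / sqrt a) x \<partial>lborel)"
    using normal_density_mult_exp_square[OF assms(1) a a_def] a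
    by (intro nn_integral_cong) (simp add: ennreal_mult[symmetric] normal_density_nonneg)
  also have "\<dots> = ennreal (1 / sqrt a) * (\<integral>\<^sup>+x. normal_density 0 (\<sigma> / sqrt a) x \<partial>lborel)"
    by (rule nn_integral_cmult) measurable
  also have "(\<integral>\<^sup>+x. normal_density 0 (\<sigma> / sqrt a) x \<partial>lborel) = 1"
    using assms(1) a by (subst nn_integral_eq_integral) (auto simp: normal_density_nonneg)
  finally show ?thesis by (simp add: a_def)
qed

lemma has_bochner_integral_gauss_vec_exp_square:
  assumes "2 * t * (\<Sum>i<d. (c i)\<^sup>2) < 1"
  shows "has_bochner_integral (gauss_vec d) (\<lambda>g. exp (t * (\<Sum>i<d. c i * g i)\<^sup>2))
           (1 / sqrt (1 - 2 * t * (\<Sum>i<d. (c i)\<^sup>2)))"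
proof (cases "\<exists>i<d. c i \<noteq> 0")
  case True
  define \<sigma> where "\<sigma> = sqrt (\<Sum>i<d. (c i)\<^sup>2)"
  obtain j where "j < d" "c j \<noteq> 0" using True by blast
  then have "0 < \<sigma>"
    unfolding \<sigma>_def by (intro real_sqrt_gt_zero sum_pos2[of _ j]) auto
  moreover have "\<sigma>\<^sup>2 = (\<Sum>i<d. (c i)\<^sup>2)"
    by (simp add: \<sigma>_def sum_nonneg)
  ultimately have "(\<integral>\<^sup>+g. exp (t * (\<Sum>i<d. c i * g i)\<^sup>2) \<partial>gauss_vec d)
      = 1 / sqrt (1 - 2 * t * (\<Sum>i<d. (c i)\<^sup>2))"
    using distributed_nn_integral[OF gauss_vec_linear_distributed[OF True], of "\<lambda>x. exp (t * x\<^sup>2)"]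
      nn_integral_normal_exp_square[of \<sigma> t] assms
    by (simp add: \<sigma>_def ennreal_mult[symmetric] normal_density_nonneg)
  then show ?thesis
    using assms by (intro has_bochner_integral_nn_integral) (auto simp: gauss_vec_def)
next
  case False
  interpret prob_space "gauss_vec d" by (rule prob_space_gauss_vec)
  show ?thesis
    using False by (simp add: has_bochner_integral_iff prob_space)
qed

lemma gauss_vec_exp_square_moment:
  assumes "4 * t * (\<Sum>i<d. (c i)\<^sup>2) \<le> 1"
  shows "integrable (gauss_vec d) (\<lambda>g. exp (t * (\<Sum>i<d. c i * g i)\<^sup>2))"
    and "(\<integral>g. exp (t * (\<Sum>i<d. c i * g i)\<^sup>2) \<partial>gauss_vec d) \<le> sqrt 2"
proof -
  define v where "v = (\<Sum>i<d. (c i)\<^sup>2)"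
  have half: "1 / 2 \<le> 1 - 2 * t * v" using assms by (simp add: v_def)
  then have I: "has_bochner_integral (gauss_vec d) (\<lambda>g. exp (t * (\<Sum>i<d. c i * g i)\<^sup>2))
      (1 / sqrt (1 - 2 * t * v))"
    unfolding v_def by (intro has_bochner_integral_gauss_vec_exp_square) simp
  then show "integrable (gauss_vec d) (\<lambda>g. exp (t * (\<Sum>i<d. c i * g i)\<^sup>2))"
    by (simp add: has_bochner_integral_iff)
  have "1 / sqrt (1 - 2 * t * v) \<le> 1 / sqrt (1 / 2)"
    using half by (intro divide_left_mono) auto
  then show "(\<integral>g. exp (t * (\<Sum>i<d. c i * g i)\<^sup>2) \<partial>gauss_vec d) \<le> sqrt 2"
    using has_bochner_integral_integral_eq[OF I] by (simp add: real_sqrt_divide)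
qed

lemma gauss_vec_sum_exp_square_DTg_moment:
  assumes "\<And>j. j < n \<Longrightarrow> 4 * t * (\<Sum>i<d. (D i j)\<^sup>2) \<le> 1"
  shows "integrable (gauss_vec d) (\<lambda>g. \<Sum>j<n. exp (t * (DTg d D g j)\<^sup>2))"
    and "(\<integral>g. (\<Sum>j<n. exp (t * (DTg d D g j)\<^sup>2)) \<partial>gauss_vec d) \<le> sqrt 2 * n"
proof -
  have moment: "integrable (gauss_vec d) (\<lambda>g. exp (t * (DTg d D g j)\<^sup>2))"
    "(\<integral>g. exp (t * (DTg d D g j)\<^sup>2) \<partial>gauss_vec d) \<le> sqrt 2" if "j < n" for j
    using gauss_vec_exp_square_moment[of t "\<lambda>i. D i j" d] assms[OF that] by (simp_all add: DTg_def)
  show "integrable (gauss_vec d) (\<lambda>g. \<Sum>j<n. exp (t * (DTg d D g j)\<^sup>2))"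
    using moment(1) by (intro Bochner_Integration.integrable_sum) auto
  have "(\<integral>g. (\<Sum>j<n. exp (t * (DTg d D g j)\<^sup>2)) \<partial>gauss_vec d)
      = (\<Sum>j<n. \<integral>g. exp (t * (DTg d D g j)\<^sup>2) \<partial>gauss_vec d)"
    using moment(1) by (intro Bochner_Integration.integral_sum) auto
  also have "\<dots> \<le> (\<Sum>j<n. sqrt 2)"
    using moment(2) by (intro sum_mono) auto
  finally show "(\<integral>g. (\<Sum>j<n. exp (t * (DTg d D g j)\<^sup>2)) \<partial>gauss_vec d) \<le> sqrt 2 * n"
    by (simp add: mult.commute)
qed

theorem lemma4p7:
  fixes d n s :: nat and D :: "nat \<Rightarrow> nat \<Rightarrow> real" and \<rho> :: real
  assumes "1 \<le> s" and "s \<le> n"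
    and "\<forall>j<n. (\<Sum>i<d. (D i j)\<^sup>2) \<le> \<rho>"
  shows "(\<integral>\<^sup>+ g. ennreal (sqrt ((1 / real s) * (\<Sum>l<s. (rearr (DTg d D g) n ! l)\<^sup>2)))
            \<partial>gauss_vec d)
         \<le> ennreal (sqrt (4 * \<rho> * ln (sqrt 2 * real n / real s)))"
proof -
  interpret prob_space "gauss_vec d" by (rule prob_space_gauss_vec)
  define Y where "Y g = (1 / real s) * (\<Sum>l<s. (rearr (DTg d D g) n ! l)\<^sup>2)" for g
  have "0 \<le> (\<Sum>i<d. (D i 0)\<^sup>2)" by (simp add: sum_nonneg)
  then consider "\<rho> = 0" | "0 < \<rho>" using assms by fastforce
  then show ?thesis
  proof cases
    case 1
    then have "Y g = 0" for g
      using assms(2,3) by (simp add: Y_def rearr_DTg_zero_columns)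
    then show ?thesis unfolding Y_def[symmetric] by simp
  next
    case 2
    define t where "t = 1 / (4 * \<rho>)"
    define Z where "Z g = (\<Sum>j<n. exp (t * (DTg d D g j)\<^sup>2)) / s" for g
    have "4 * t * (\<Sum>i<d. (D i j)\<^sup>2) \<le> 1" if "j < n" for j
      using assms(3) that 2 by (simp add: t_def)
    note moment = gauss_vec_sum_exp_square_DTg_moment[of n t D d, OF this]
    have "1 < sqrt 2 * n / s"
    proof -
      have "real s \<le> 1 * n" "1 * real n < sqrt 2 * n"
        using assms(1,2) by (auto intro!: mult_strict_right_mono)
      then have "real s < sqrt 2 * n" by linarith
      with assms(1) show ?thesis by simp
    qed
    moreover have "integrable (gauss_vec d) Z" "expectation Z \<le> sqrt 2 * n / s"
      using moment unfolding Z_def by (simp_all add: divide_right_mono)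
    ultimately have "(\<integral>\<^sup>+g. sqrt (Y g) \<partial>gauss_vec d) \<le> sqrt (ln (sqrt 2 * n / s) / t)"
      using 2 assms(1,2) exp_mean_square_rearr_le[of s n t]
      by (intro nn_integral_sqrt_le_ln_exp_moment) (auto simp: Y_def Z_def t_def sum_nonneg)
    then show ?thesis by (simp add: Y_def t_def mult.commute)
  qed
qed

end
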